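(* There exists $z_0>0$, depending only on $\mathcal{D}$, such that $$\int_\Omega|\nabla u|^2\,dx\ \ge\ z_0\int_\Omega|u|^2\,dx\qquad\text{for all }u\in H^1_0(\Omega).$$
   Context: Geometric setting (standing assumptions). Work in $\mathbb{R}^2$. Let $D^{(1)},\dots,D^{(N_{\mathrm{type}})}$ be finitely many bounded simply connected open sets with $C^1$ boundaries, each of area $1$. For each $n$ let $\Lambda^{(n)}\subset\mathbb{R}^2$ be a discrete set, $\mathcal{D}:=\bigcup_n\bigcup_{\bm u\in\Lambda^{(n)}}(\bm u+D^{(n)})$ (the resonators), and $\Omega:=\mathbb{R}^2\setminus\overline{\mathcal{D}}$. Assume: (i) there is $c>0$ such that any two distinct resonators (connected components of $\mathcal{D}$) are at distance $\ge c$; (ii) with a lattice $\Lambda=\{m\mathring{\bm v}_1+n\mathring{\bm v}_2\}$, there are finitely many polygons $Y^{(1)},\dots,Y^{(M_{\mathrm{poly}})}$ and sets $\Sigma^{(m)}\subset\Lambda$ such that the translates $\bm v+Y^{(m)}$ ($\bm v\in\Sigma^{(m)}$) are pairwise disjoint and their closures cover $\mathbb{R}^2$; (iii) each translate $\bm v+Y^{(m)}$ contains exactly $K\ge1$ resonators, $(\bm v+Y^{(m)})\cap\mathcal{D}$ is compactly contained in $\bm v+Y^{(m)}$, and $\operatorname{dist}(\partial(\bm v+Y^{(m)}),\mathcal{D})\ge c$. *)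

theory Defs
  imports "HOL-Analysis.Analysis"
begin

type_synonym pt = "real^2"

definition C1_boundary :: "pt set \<Rightarrow> bool" where
  "C1_boundary D \<longleftrightarrow>
     (\<forall>p\<in>frontier D. \<exists>r>0. \<exists>(Q::pt \<Rightarrow> pt) (f::real \<Rightarrow> real). orthogonal_transformation Q \<and>
        f C1_differentiable_on UNIV \<and>
        (\<forall>x\<in>ball p r. x \<in> D \<longleftrightarrow> (Q (x - p)) $ 2 < f ((Q (x - p)) $ 1)))"

definition discrete_set :: "pt set \<Rightarrow> bool" where
  "discrete_set S \<longleftrightarrow> (\<forall>r. finite (S \<inter> cball 0 r))"

definition polygon :: "pt set \<Rightarrow> bool" where
  "polygon Y \<longleftrightarrow> open Y \<and> bounded Y \<and> connected Y \<and> Y \<noteq> {} \<and>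
     (\<exists>S. finite S \<and> frontier Y = (\<Union>(a,b)\<in>S. closed_segment a b))"

definition lattice_gen :: "pt \<Rightarrow> pt \<Rightarrow> pt set" where
  "lattice_gen v1 v2 = {of_int m *\<^sub>R v1 + of_int n *\<^sub>R v2 | m n. True}"

definition partial_d :: "2 \<Rightarrow> (pt \<Rightarrow> complex) \<Rightarrow> pt \<Rightarrow> complex" where
  "partial_d i f x = frechet_derivative f (at x) (axis i 1)"

fun iter_partial :: "2 list \<Rightarrow> (pt \<Rightarrow> complex) \<Rightarrow> pt \<Rightarrow> complex" where
  "iter_partial [] f = f"
| "iter_partial (i # is) f = partial_d i (iter_partial is f)"

definition smooth_fun :: "(pt \<Rightarrow> complex) \<Rightarrow> bool" where
  "smooth_fun f \<longleftrightarrow> (\<forall>is x. iter_partial is f differentiable (at x))"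

definition test_fun :: "pt set \<Rightarrow> (pt \<Rightarrow> complex) \<Rightarrow> bool" where
  "test_fun \<Omega> \<phi> \<longleftrightarrow> smooth_fun \<phi> \<and> compact (closure {x. \<phi> x \<noteq> 0}) \<and>
      closure {x. \<phi> x \<noteq> 0} \<subseteq> \<Omega>"

text \<open>u \<in> H^1_0(\<Omega>) with (weak) gradient g: u, g square integrable on \<Omega> and they are the
  H^1-limit of smooth compactly supported functions in \<Omega>.\<close>
definition H10_grad :: "pt set \<Rightarrow> (pt \<Rightarrow> complex) \<Rightarrow> (pt \<Rightarrow> complex^2) \<Rightarrow> bool" where
  "H10_grad \<Omega> u g \<longleftrightarrow>
     set_borel_measurable lborel \<Omega> u \<and> set_borel_measurable lborel \<Omega> g \<and>
     set_integrable lborel \<Omega> (\<lambda>x. (cmod (u x))^2) \<and>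
     (\<forall>i. set_integrable lborel \<Omega> (\<lambda>x. (cmod (g x $ i))^2)) \<and>
     (\<exists>\<phi>. (\<forall>n. test_fun \<Omega> (\<phi> n)) \<and>
        (\<lambda>n. LINT x:\<Omega>|lborel. (cmod (\<phi> n x - u x))^2) \<longlonglongrightarrow> 0 \<and>
        (\<forall>i. (\<lambda>n. LINT x:\<Omega>|lborel. (cmod (partial_d i (\<phi> n) x - g x $ i))^2) \<longlonglongrightarrow> 0))"

definition in_H10 :: "pt set \<Rightarrow> (pt \<Rightarrow> complex) \<Rightarrow> bool" where
  "in_H10 \<Omega> u \<longleftrightarrow> (\<exists>g. H10_grad \<Omega> u g)"

end

theory Submission
  imports Defs
begin

text \<open>Every point of the plane lies within a bounded distance of a ball of fixed radius contained
  in the resonators, so there is a finite set \<open>F\<close> of shifts such that \<open>x + w\<close> lies in a resonator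
  for some \<open>w \<in> F\<close>, whatever \<open>x\<close> is. A test function \<open>\<phi>\<close> vanishes there, and integrating its
  gradient along the segment from \<open>x\<close> to \<open>x + w\<close> gives
  \<open>|\<phi> x|\<^sup>2 \<le> |w|\<^sup>2 \<integral>\<^sub>0\<^sup>1 |\<nabla>\<phi> (x + t w)|\<^sup>2 dt\<close>. Summing over \<open>w \<in> F\<close> and integrating
  in \<open>x\<close>, translation invariance of Lebesgue measure turns each segment average into
  \<open>\<parallel>\<nabla>\<phi>\<parallel>\<^sup>2\<close>, so \<open>\<parallel>\<phi>\<parallel>\<^sup>2 \<le> (\<Sum>w\<in>F. |w|\<^sup>2) \<parallel>\<nabla>\<phi>\<parallel>\<^sup>2\<close>; the inequality passes to \<open>H\<^sup>1\<^sub>0\<close> by density.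
  Of the geometric hypotheses only these are needed: the cells are bounded, cover the plane and each
  contains a resonator, and the resonators are open, nonempty and connected.\<close>

definition grad :: "(pt \<Rightarrow> complex) \<Rightarrow> pt \<Rightarrow> complex^2" where
  "grad \<phi> x = (\<chi> i. partial_d i \<phi> x)"

lemma norm_vec_power2: "(norm (v :: 'a::real_normed_vector^'n))^2 = (\<Sum>i\<in>UNIV. (norm (v $ i))^2)"
  by (simp add: norm_vec_def L2_set_def sum_nonneg)

lemma smooth_fun_differentiable: "smooth_fun \<phi> \<Longrightarrow> \<phi> differentiable (at x)"
  unfolding smooth_fun_def by (metis iter_partial.simps(1))

lemma smooth_fun_partial_d_differentiable: "smooth_fun \<phi> \<Longrightarrow> partial_d i \<phi> differentiable (at x)"
  unfolding smooth_fun_def by (metis iter_partial.simps)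

lemma smooth_fun_continuous: "smooth_fun \<phi> \<Longrightarrow> continuous_on UNIV \<phi>"
  by (meson continuous_at_imp_continuous_on differentiable_imp_continuous_within smooth_fun_differentiable)

lemma smooth_fun_grad_continuous: "smooth_fun \<phi> \<Longrightarrow> continuous_on UNIV (grad \<phi>)"
  unfolding grad_def
  by (intro continuous_on_vec_lambda continuous_at_imp_continuous_on ballI
        differentiable_imp_continuous_within smooth_fun_partial_d_differentiable)

lemma norm_linear_le_norm_basis_images:
  fixes L :: "real^'n \<Rightarrow> 'b::real_normed_vector"
  assumes "linear L"
  shows "norm (L w) \<le> norm w * norm (\<chi> i. L (axis i 1))"
proof -
  have "w = (\<Sum>i\<in>UNIV. (w $ i) *\<^sub>R axis i 1)"
    using basis_expansion[of w] by (simp add: scalar_mult_eq_scaleR)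
  then have "L w = (\<Sum>i\<in>UNIV. (w $ i) *\<^sub>R L (axis i 1))"
    by (metis (no_types, lifting) assms linear_scale linear_sum sum.cong)
  then have "norm (L w) \<le> (\<Sum>i\<in>UNIV. \<bar>w $ i\<bar> * norm (L (axis i 1)))"
    using norm_sum[of "\<lambda>i. (w $ i) *\<^sub>R L (axis i 1)" UNIV] by simp
  also have "\<dots> \<le> sqrt ((\<Sum>i\<in>UNIV. \<bar>w $ i\<bar>^2) * (\<Sum>i\<in>UNIV. (norm (L (axis i 1)))^2))"
    by (rule real_le_rsqrt, rule Cauchy_Schwarz_ineq_sum)
  also have "\<dots> = norm w * norm (\<chi> i. L (axis i 1))"
    by (simp add: norm_vec_def L2_set_def real_sqrt_mult)
  finally show ?thesis .
qed

lemma norm_frechet_derivative_le_grad: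
  assumes "smooth_fun \<phi>"
  shows "norm (frechet_derivative \<phi> (at y) w) \<le> norm w * norm (grad \<phi> y)"
  using norm_linear_le_norm_basis_images[of "frechet_derivative \<phi> (at y)" w]
    smooth_fun_differentiable[OF assms] frechet_derivative_works has_derivative_linear
  unfolding grad_def partial_d_def by blast

lemma square_integral_le_integral_square:
  fixes f :: "real \<Rightarrow> real"
  assumes "continuous_on {0..1} f"
  shows "(integral {0..1} f)^2 \<le> integral {0..1} (\<lambda>t. (f t)^2)"
proof -
  define a where "a = integral {0..1} f"
  have "f integrable_on {0..1}" "(\<lambda>t. (f t)^2) integrable_on {0..1}"
    using assms by (auto intro!: integrable_continuous_real continuous_intros)
  then have "((\<lambda>t. (f t)^2 - 2 * a * f t + a^2) has_integral
      integral {0..1} (\<lambda>t. (f t)^2) - 2 * a * a + a^2) {0..1}"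
    by (intro has_integral_add has_integral_diff has_integral_mult_right integrable_integral)
       (use has_integral_const_real[of "a^2" 0 1] in \<open>auto simp: a_def\<close>)
  then have "0 \<le> integral {0..1} (\<lambda>t. (f t)^2) - 2 * a * a + a^2"
  proof (rule has_integral_nonneg)
    show "0 \<le> (f t)^2 - 2 * a * f t + a^2" for t
      using zero_le_power2[of "f t - a"] unfolding power2_diff by (simp add: mult_ac)
  qed
  then show ?thesis unfolding a_def by (simp add: power2_eq_square)
qed

lemma smooth_fun_norm_sq_le_line_integral:
  assumes sm: "smooth_fun \<phi>" and zero: "\<phi> (x + w) = 0"
  shows "(cmod (\<phi> x))^2 \<le> (norm w)^2 * integral {0..1} (\<lambda>t. (norm (grad \<phi> (x + t *\<^sub>R w)))^2)"
proof -
  define D where "D t = frechet_derivative \<phi> (at (x + t *\<^sub>R w)) w" for t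
  define G where "G t = norm (grad \<phi> (x + t *\<^sub>R w))" for t
  have G_cont: "continuous_on {0..1} G"
    unfolding G_def
    by (intro continuous_intros continuous_on_compose2[OF smooth_fun_grad_continuous[OF sm]]) auto
  have "((\<lambda>t. \<phi> (x + t *\<^sub>R w)) has_vector_derivative D t) (at t within {0..1})" for t
  proof -
    have "((\<lambda>t. x + t *\<^sub>R w) has_vector_derivative w) (at t within {0..1})"
      by (auto intro!: derivative_eq_intros)
    moreover have "(\<phi> has_derivative frechet_derivative \<phi> (at (x + t *\<^sub>R w)))
        (at (x + t *\<^sub>R w) within (\<lambda>t. x + t *\<^sub>R w) ` {0..1})"
      using sm smooth_fun_differentiable frechet_derivative_works has_derivative_at_withinI by blast
    ultimately show ?thesis
      unfolding D_def using vector_derivative_diff_chain_within by (fastforce simp: o_def)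
  qed
  then have D_has: "(D has_integral - \<phi> x) {0..1}"
    using fundamental_theorem_of_calculus[of 0 1 "\<lambda>t. \<phi> (x + t *\<^sub>R w)" D] zero by simp
  then have D_int: "D integrable_on {0..1}"
    by blast
  have "cmod (\<phi> x) = norm (integral {0..1} D)"
    using D_has by (simp add: integral_unique)
  also have "\<dots> \<le> integral {0..1} (\<lambda>t. norm w * G t)"
  proof (rule integral_norm_bound_integral[OF D_int])
    show "(\<lambda>t. norm w * G t) integrable_on {0..1}"
      by (intro integrable_continuous_real continuous_intros G_cont)
    show "norm (D t) \<le> norm w * G t" for t
      unfolding D_def G_def by (rule norm_frechet_derivative_le_grad[OF sm])
  qed
  finally have "cmod (\<phi> x) \<le> norm w * integral {0..1} G"
    by simp
  then have "(cmod (\<phi> x))^2 \<le> (norm w)^2 * (integral {0..1} G)^2"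
    by (metis norm_ge_zero power_mono power_mult_distrib)
  also have "\<dots> \<le> (norm w)^2 * integral {0..1} (\<lambda>t. (G t)^2)"
    by (intro mult_left_mono square_integral_le_integral_square G_cont) simp
  finally show ?thesis unfolding G_def .
qed

lemma ennreal_integral_eq_nn_integral_indicator:
  fixes f :: "'a::euclidean_space \<Rightarrow> real"
  assumes "f integrable_on S" and "\<And>x. x \<in> S \<Longrightarrow> 0 \<le> f x"
  shows "ennreal (integral S f) = (\<integral>\<^sup>+x. indicator S x * f x \<partial>lborel)"
  using nn_integral_has_integral_lebesgue[OF assms(2) integrable_integral[OF assms(1)]] by simp

lemma nn_integral_lborel_translate:
  fixes g :: "'a::euclidean_space \<Rightarrow> ennreal"
  assumes [measurable]: "g \<in> borel_measurable borel"
  shows "(\<integral>\<^sup>+x. g (x + c) \<partial>lborel) = (\<integral>\<^sup>+x. g x \<partial>lborel)"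
proof -
  have "(\<integral>\<^sup>+x. g x \<partial>lborel) = (\<integral>\<^sup>+x. g x \<partial>distr lborel borel ((+) c))"
    by (simp add: lborel_distr_plus)
  also have "\<dots> = (\<integral>\<^sup>+x. g (c + x) \<partial>lborel)"
    by (simp add: nn_integral_distr)
  finally show ?thesis by (simp add: add.commute)
qed

lemma nn_integral_segment_translates:
  fixes g :: "'a::euclidean_space \<Rightarrow> ennreal"
  assumes [measurable]: "g \<in> borel_measurable borel"
  shows "(\<integral>\<^sup>+x. \<integral>\<^sup>+t. indicator {0..1::real} t * g (x + t *\<^sub>R w) \<partial>lborel \<partial>lborel) = (\<integral>\<^sup>+x. g x \<partial>lborel)"
proof -
  have "(\<integral>\<^sup>+x. \<integral>\<^sup>+t. indicator {0..1::real} t * g (x + t *\<^sub>R w) \<partial>lborel \<partial>lborel)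
      = (\<integral>\<^sup>+t. \<integral>\<^sup>+x. indicator {0..1::real} t * g (x + t *\<^sub>R w) \<partial>lborel \<partial>lborel)"
    by (rule lborel_pair.Fubini') measurable
  also have "\<dots> = (\<integral>\<^sup>+t. indicator {0..1::real} t * (\<integral>\<^sup>+x. g x \<partial>lborel) \<partial>lborel)"
  proof (rule nn_integral_cong)
    fix t :: real
    have "(\<integral>\<^sup>+x. indicator {0..1} t * g (x + t *\<^sub>R w) \<partial>lborel)
        = indicator {0..1} t * (\<integral>\<^sup>+x. g (x + t *\<^sub>R w) \<partial>lborel)"
      by (rule nn_integral_cmult) measurable
    then show "(\<integral>\<^sup>+x. indicator {0..1} t * g (x + t *\<^sub>R w) \<partial>lborel)
        = indicator {0..1} t * (\<integral>\<^sup>+x. g x \<partial>lborel)"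
      by (simp add: nn_integral_lborel_translate)
  qed
  also have "\<dots> = (\<integral>\<^sup>+x. g x \<partial>lborel)"
    by (subst mult.commute, subst nn_integral_cmult_indicator) auto
  finally show ?thesis .
qed

lemma smooth_fun_nn_integral_poincare:
  assumes sm: "smooth_fun \<phi>" and fin: "finite F" and zero: "\<And>x. \<exists>w\<in>F. \<phi> (x + w) = 0"
  shows "(\<integral>\<^sup>+x. (cmod (\<phi> x))^2 \<partial>lborel)
    \<le> ennreal (\<Sum>w\<in>F. (norm w)^2) * (\<integral>\<^sup>+x. (norm (grad \<phi> x))^2 \<partial>lborel)"
proof -
  define g where "g y = ennreal ((norm (grad \<phi> y))^2)" for y
  have "(\<lambda>y. (norm (grad \<phi> y))^2) \<in> borel_measurable borel"
    by (intro borel_measurable_continuous_onI continuous_intros smooth_fun_grad_continuous[OF sm])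
  then have g_meas[measurable]: "g \<in> borel_measurable borel"
    unfolding g_def by measurable
  define I where "I w x = (\<integral>\<^sup>+t. indicator {0..1::real} t * g (x + t *\<^sub>R w) \<partial>lborel)" for w x
  have pointwise: "ennreal ((cmod (\<phi> x))^2) \<le> (\<Sum>w\<in>F. ennreal ((norm w)^2) * I w x)" for x
  proof -
    obtain w where w: "w \<in> F" "\<phi> (x + w) = 0" using zero by blast
    have cont: "continuous_on {0..1} (\<lambda>t. (norm (grad \<phi> (x + t *\<^sub>R w)))^2)"
      by (intro continuous_intros continuous_on_compose2[OF smooth_fun_grad_continuous[OF sm]]) auto
    have "ennreal ((cmod (\<phi> x))^2)
        \<le> ennreal ((norm w)^2 * integral {0..1} (\<lambda>t. (norm (grad \<phi> (x + t *\<^sub>R w)))^2))"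
      by (intro ennreal_leI smooth_fun_norm_sq_le_line_integral[OF sm w(2)])
    also have "\<dots> = ennreal ((norm w)^2) * I w x"
      unfolding I_def g_def
      by (simp add: ennreal_mult integral_nonneg integrable_continuous_real cont
          ennreal_integral_eq_nn_integral_indicator ennreal_indicator)
    also have "\<dots> \<le> (\<Sum>w\<in>F. ennreal ((norm w)^2) * I w x)"
      by (rule member_le_sum) (use w fin in auto)
    finally show ?thesis .
  qed
  have "(\<integral>\<^sup>+x. (cmod (\<phi> x))^2 \<partial>lborel) \<le> (\<integral>\<^sup>+x. (\<Sum>w\<in>F. ennreal ((norm w)^2) * I w x) \<partial>lborel)"
    by (rule nn_integral_mono) (rule pointwise)
  also have "\<dots> = (\<Sum>w\<in>F. ennreal ((norm w)^2) * (\<integral>\<^sup>+x. I w x \<partial>lborel))"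
    unfolding I_def by (simp add: nn_integral_sum nn_integral_cmult)
  also have "\<dots> = ennreal (\<Sum>w\<in>F. (norm w)^2) * (\<integral>\<^sup>+x. g x \<partial>lborel)"
    unfolding I_def nn_integral_segment_translates[OF g_meas]
    by (simp add: sum_distrib_right[symmetric])
  finally show ?thesis unfolding g_def .
qed

lemma test_fun_smooth: "test_fun \<Omega> \<phi> \<Longrightarrow> smooth_fun \<phi>"
  unfolding test_fun_def by blast

lemma test_fun_eq_0: "test_fun \<Omega> \<phi> \<Longrightarrow> x \<notin> \<Omega> \<Longrightarrow> \<phi> x = 0"
  unfolding test_fun_def using closure_subset[of "{x. \<phi> x \<noteq> 0}"] by auto

lemma smooth_fun_grad_eq_0:
  assumes sm: "smooth_fun \<phi>" and x: "x \<notin> closure {x. \<phi> x \<noteq> 0}"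
  shows "grad \<phi> x = 0"
proof -
  have "(\<phi> has_derivative (\<lambda>h. 0)) (at x)"
  proof (rule has_derivative_transform_within_open)
    show "((\<lambda>_. 0) has_derivative (\<lambda>h. 0)) (at x)" by (rule has_derivative_const)
    show "\<And>y. y \<in> - closure {x. \<phi> x \<noteq> 0} \<Longrightarrow> 0 = \<phi> y"
      using closure_subset[of "{x. \<phi> x \<noteq> 0}"] by auto
    show "open (- closure {x. \<phi> x \<noteq> 0})" "x \<in> - closure {x. \<phi> x \<noteq> 0}"
      using x by auto
  qed
  moreover have "(\<phi> has_derivative frechet_derivative \<phi> (at x)) (at x)"
    using smooth_fun_differentiable[OF sm] by (simp add: frechet_derivative_works)
  ultimately have "frechet_derivative \<phi> (at x) = (\<lambda>h. 0)"
    by (metis has_derivative_unique)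
  then show ?thesis
    by (simp add: grad_def partial_d_def vec_eq_iff)
qed

lemma test_fun_grad_eq_0: "test_fun \<Omega> \<phi> \<Longrightarrow> x \<notin> \<Omega> \<Longrightarrow> grad \<phi> x = 0"
  using smooth_fun_grad_eq_0 unfolding test_fun_def by (meson subsetD)

lemma integrable_continuous_compact_support:
  fixes f :: "'a::euclidean_space \<Rightarrow> 'b::{banach, second_countable_topology}"
  assumes "continuous_on UNIV f" and "compact K" and "\<And>x. x \<notin> K \<Longrightarrow> f x = 0"
  shows "integrable lborel f"
proof -
  have "continuous_on K f"
    by (rule continuous_on_subset[OF assms(1)]) simp
  then have "integrable lborel (\<lambda>x. indicator K x *\<^sub>R f x)"
    by (rule borel_integrable_compact[OF assms(2)])
  moreover have "(\<lambda>x. indicator K x *\<^sub>R f x) = f"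
  proof
    show "indicator K x *\<^sub>R f x = f x" for x
      using assms(3)[of x] by (cases "x \<in> K") simp_all
  qed
  ultimately show ?thesis
    by simp
qed

lemma test_fun_integrable_norm_sq:
  assumes "test_fun \<Omega> \<phi>"
  shows "integrable lborel (\<lambda>x. (cmod (\<phi> x))^2)"
    and "integrable lborel (\<lambda>x. (norm (grad \<phi> x))^2)"
proof -
  have sm: "smooth_fun \<phi>" and K: "compact (closure {x. \<phi> x \<noteq> 0})"
    using assms unfolding test_fun_def by auto
  show "integrable lborel (\<lambda>x. (cmod (\<phi> x))^2)"
  proof (rule integrable_continuous_compact_support[OF _ K])
    show "continuous_on UNIV (\<lambda>x. (cmod (\<phi> x))^2)"
      by (intro continuous_intros smooth_fun_continuous[OF sm])
    show "(cmod (\<phi> x))^2 = 0" if "x \<notin> closure {x. \<phi> x \<noteq> 0}" for x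
      using that closure_subset[of "{x. \<phi> x \<noteq> 0}"] by auto
  qed
  show "integrable lborel (\<lambda>x. (norm (grad \<phi> x))^2)"
  proof (rule integrable_continuous_compact_support[OF _ K])
    show "continuous_on UNIV (\<lambda>x. (norm (grad \<phi> x))^2)"
      by (intro continuous_intros smooth_fun_grad_continuous[OF sm])
    show "(norm (grad \<phi> x))^2 = 0" if "x \<notin> closure {x. \<phi> x \<noteq> 0}" for x
      using smooth_fun_grad_eq_0[OF sm that] by simp
  qed
qed

lemma test_fun_poincare:
  assumes tf: "test_fun \<Omega> \<phi>" and fin: "finite F" and outside: "\<And>x. \<exists>w\<in>F. x + w \<notin> \<Omega>"
  shows "(\<integral>x. (cmod (\<phi> x))^2 \<partial>lborel) \<le> (\<Sum>w\<in>F. (norm w)^2) * (\<integral>x. (norm (grad \<phi> x))^2 \<partial>lborel)"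
proof -
  have zero: "\<exists>w\<in>F. \<phi> (x + w) = 0" for x
    using outside[of x] test_fun_eq_0[OF tf] by metis
  have "ennreal (\<integral>x. (cmod (\<phi> x))^2 \<partial>lborel) = (\<integral>\<^sup>+x. (cmod (\<phi> x))^2 \<partial>lborel)"
    by (rule nn_integral_eq_integral[symmetric]) (use test_fun_integrable_norm_sq(1)[OF tf] in auto)
  also have "\<dots> \<le> ennreal (\<Sum>w\<in>F. (norm w)^2) * (\<integral>\<^sup>+x. (norm (grad \<phi> x))^2 \<partial>lborel)"
    by (rule smooth_fun_nn_integral_poincare[OF test_fun_smooth[OF tf] fin zero])
  also have "(\<integral>\<^sup>+x. (norm (grad \<phi> x))^2 \<partial>lborel) = ennreal (\<integral>x. (norm (grad \<phi> x))^2 \<partial>lborel)"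
    by (rule nn_integral_eq_integral) (use test_fun_integrable_norm_sq(2)[OF tf] in auto)
  also have "ennreal (\<Sum>w\<in>F. (norm w)^2) * \<dots>
      = ennreal ((\<Sum>w\<in>F. (norm w)^2) * (\<integral>x. (norm (grad \<phi> x))^2 \<partial>lborel))"
    by (rule ennreal_mult[symmetric]) (simp_all add: sum_nonneg)
  finally show ?thesis
    by (subst (asm) ennreal_le_iff) (simp_all add: sum_nonneg)
qed

lemma norm_sq_le_split:
  fixes a b :: "'a::real_normed_vector"
  assumes e: "0 < e"
  shows "(norm a)^2 \<le> (1 + e) * (norm b)^2 + (1 + 1/e) * (norm (a - b))^2"
proof -
  define s t where "s = norm b" and "t = norm (a - b)"
  have "norm a \<le> s + t"
    unfolding s_def t_def using norm_triangle_ineq[of b "a - b"] by simp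
  then have "(norm a)^2 \<le> (s + t)^2"
    by (simp add: power_mono)
  also have "\<dots> \<le> (1 + e) * s^2 + (1 + 1/e) * t^2"
  proof -
    have "0 \<le> (e * s - t)^2 / e"
      using e by simp
    also have "\<dots> = e * s^2 - 2 * s * t + t^2 / e"
      using e by (simp add: power2_eq_square field_simps)
    finally show ?thesis
      by (simp add: power2_eq_square algebra_simps)
  qed
  finally show ?thesis
    unfolding s_def t_def .
qed

lemma integrable_norm_diff_sq:
  fixes f g :: "'a \<Rightarrow> 'b::{banach, second_countable_topology}"
  assumes [measurable]: "f \<in> borel_measurable M" "g \<in> borel_measurable M"
    and "integrable M (\<lambda>x. (norm (f x))^2)" and "integrable M (\<lambda>x. (norm (g x))^2)"
  shows "integrable M (\<lambda>x. (norm (f x - g x))^2)"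
proof (rule Bochner_Integration.integrable_bound)
  show "integrable M (\<lambda>x. 2 * (norm (f x))^2 + 2 * (norm (g x))^2)"
    using assms(3,4) by simp
  show "AE x in M. norm ((norm (f x - g x))^2) \<le> norm (2 * (norm (f x))^2 + 2 * (norm (g x))^2)"
    using norm_sq_le_split[of 1 "f x - g x" "f x" for x] by simp
qed measurable

lemma integral_norm_sq_le_split:
  fixes f g :: "'a \<Rightarrow> 'b::{banach, second_countable_topology}"
  assumes [measurable]: "f \<in> borel_measurable M" "g \<in> borel_measurable M"
    and f: "integrable M (\<lambda>x. (norm (f x))^2)" and g: "integrable M (\<lambda>x. (norm (g x))^2)"
    and e: "0 < e"
  shows "(\<integral>x. (norm (f x))^2 \<partial>M)
    \<le> (1 + e) * (\<integral>x. (norm (g x))^2 \<partial>M) + (1 + 1/e) * (\<integral>x. (norm (f x - g x))^2 \<partial>M)"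
proof -
  have fg: "integrable M (\<lambda>x. (norm (f x - g x))^2)"
    by (rule integrable_norm_diff_sq[OF assms(1-4)])
  have "(\<integral>x. (norm (f x))^2 \<partial>M)
      \<le> (\<integral>x. (1 + e) * (norm (g x))^2 + (1 + 1/e) * (norm (f x - g x))^2 \<partial>M)"
    by (rule integral_mono) (use f g fg norm_sq_le_split[OF e] in auto)
  also have "\<dots> = (1 + e) * (\<integral>x. (norm (g x))^2 \<partial>M) + (1 + 1/e) * (\<integral>x. (norm (f x - g x))^2 \<partial>M)"
    using g fg by simp
  finally show ?thesis .
qed

lemma integral_norm_sq_le_of_L2_limits:
  fixes fs :: "nat \<Rightarrow> 'a \<Rightarrow> 'b::{banach, second_countable_topology}"
    and hs :: "nat \<Rightarrow> 'a \<Rightarrow> 'c::{banach, second_countable_topology}"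
  assumes [measurable]: "\<And>n. fs n \<in> borel_measurable M" "f \<in> borel_measurable M"
      "\<And>n. hs n \<in> borel_measurable M" "h \<in> borel_measurable M"
    and fs: "\<And>n. integrable M (\<lambda>x. (norm (fs n x))^2)" and f: "integrable M (\<lambda>x. (norm (f x))^2)"
    and hs: "\<And>n. integrable M (\<lambda>x. (norm (hs n x))^2)" and h: "integrable M (\<lambda>x. (norm (h x))^2)"
    and f_lim: "(\<lambda>n. \<integral>x. (norm (fs n x - f x))^2 \<partial>M) \<longlonglongrightarrow> 0"
    and h_lim: "(\<lambda>n. \<integral>x. (norm (hs n x - h x))^2 \<partial>M) \<longlonglongrightarrow> 0"
    and bound: "\<And>n. (\<integral>x. (norm (fs n x))^2 \<partial>M) \<le> C * (\<integral>x. (norm (hs n x))^2 \<partial>M)"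
    and C: "0 \<le> C"
  shows "(\<integral>x. (norm (f x))^2 \<partial>M) \<le> C * (\<integral>x. (norm (h x))^2 \<partial>M)"
proof -
  define F H where "F = (\<integral>x. (norm (f x))^2 \<partial>M)" and "H = (\<integral>x. (norm (h x))^2 \<partial>M)"
  define A B where "A n = (\<integral>x. (norm (fs n x - f x))^2 \<partial>M)" and "B n = (\<integral>x. (norm (hs n x - h x))^2 \<partial>M)"
    for n
  have F_le: "F \<le> (1 + e)^2 * C * H" if e: "0 < e" for e
  proof (rule tendsto_lowerbound)
    show "(\<lambda>n. (1 + e) * C * ((1 + e) * H + (1 + 1/e) * B n) + (1 + 1/e) * A n)
        \<longlonglongrightarrow> (1 + e)^2 * C * H"
      using f_lim h_lim unfolding A_def B_def
      by (auto intro!: tendsto_eq_intros simp: power2_eq_square)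
    have "F \<le> (1 + e) * C * ((1 + e) * H + (1 + 1/e) * B n) + (1 + 1/e) * A n" for n
    proof -
      have "F \<le> (1 + e) * (\<integral>x. (norm (fs n x))^2 \<partial>M) + (1 + 1/e) * A n"
        using integral_norm_sq_le_split[OF _ _ f fs e] unfolding F_def A_def
        by (simp add: norm_minus_commute)
      also have "(\<integral>x. (norm (fs n x))^2 \<partial>M) \<le> C * (\<integral>x. (norm (hs n x))^2 \<partial>M)"
        by (rule bound)
      also have "(\<integral>x. (norm (hs n x))^2 \<partial>M) \<le> (1 + e) * H + (1 + 1/e) * B n"
        using integral_norm_sq_le_split[OF _ _ hs h e] unfolding H_def B_def by simp
      finally show ?thesis
        using C e by (simp add: mult_left_mono mult.assoc)
    qed
    then show "\<forall>\<^sub>F n in sequentially. F \<le> (1 + e) * C * ((1 + e) * H + (1 + 1/e) * B n) + (1 + 1/e) * A n"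
      by simp
  qed simp
  show ?thesis
    unfolding F_def[symmetric] H_def[symmetric]
  proof (rule tendsto_lowerbound)
    show "((\<lambda>e. (1 + e)^2 * C * H) \<longlongrightarrow> C * H) (at_right 0)"
      by (auto intro!: tendsto_eq_intros)
    show "\<forall>\<^sub>F e in at_right 0. F \<le> (1 + e)^2 * C * H"
      using F_le eventually_at_right_less[of 0] by (auto elim: eventually_mono)
  qed simp
qed

lemma borel_measurable_vec_nth[measurable (raw)]:
  fixes f :: "'a \<Rightarrow> 'b::{real_normed_vector, second_countable_topology}^'n"
  assumes "f \<in> borel_measurable M"
  shows "(\<lambda>x. f x $ i) \<in> borel_measurable M"
proof -
  have "(\<lambda>v::'b^'n. v $ i) \<in> borel_measurable borel"
    by (intro borel_measurable_continuous_onI linear_continuous_on bounded_linear_vec_nth)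
  then show ?thesis
    using measurable_compose[OF assms] by blast
qed

lemma integral_norm_vec_sq:
  fixes f :: "'a \<Rightarrow> 'b::{real_normed_vector, second_countable_topology}^'n"
  assumes [measurable]: "f \<in> borel_measurable M" and f: "integrable M (\<lambda>x. (norm (f x))^2)"
  shows "(\<integral>x. (norm (f x))^2 \<partial>M) = (\<Sum>i\<in>UNIV. \<integral>x. (norm (f x $ i))^2 \<partial>M)"
proof -
  have "integrable M (\<lambda>x. (norm (f x $ i))^2)" for i
  proof (rule Bochner_Integration.integrable_bound[OF f])
    show "AE x in M. norm ((norm (f x $ i))^2) \<le> norm ((norm (f x))^2)"
      by (intro AE_I2) (simp add: power_mono Finite_Cartesian_Product.norm_nth_le)
  qed measurable
  then show ?thesis
    by (simp add: norm_vec_power2)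
qed

lemma H10_grad_poincare:
  assumes H: "H10_grad \<Omega> u g" and C: "0 \<le> C"
    and test_poincare: "\<And>\<phi>. test_fun \<Omega> \<phi> \<Longrightarrow>
      (\<integral>x. (cmod (\<phi> x))^2 \<partial>lborel) \<le> C * (\<integral>x. (norm (grad \<phi> x))^2 \<partial>lborel)"
  shows "(LINT x:\<Omega>|lborel. (cmod (u x))^2) \<le> C * (LINT x:\<Omega>|lborel. (\<Sum>i\<in>UNIV. (cmod (g x $ i))^2))"
proof -
  define U where "U x = indicator \<Omega> x *\<^sub>R u x" for x
  define G where "G x = indicator \<Omega> x *\<^sub>R g x" for x
  have [measurable]: "U \<in> borel_measurable lborel" "G \<in> borel_measurable lborel"
    using H unfolding H10_grad_def set_borel_measurable_def U_def G_def by auto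
  have U_sq: "indicator \<Omega> x *\<^sub>R (cmod (u x))^2 = (cmod (U x))^2" for x
    unfolding U_def by (simp add: indicator_def)
  have G_sq: "indicator \<Omega> x *\<^sub>R (cmod (g x $ i))^2 = (cmod (G x $ i))^2" for x i
    unfolding G_def by (simp add: indicator_def)
  have G_norm_sq: "indicator \<Omega> x *\<^sub>R (\<Sum>i\<in>UNIV. (cmod (g x $ i))^2) = (norm (G x))^2" for x
    unfolding G_def norm_vec_power2 by (simp add: indicator_def)
  have U_int: "integrable lborel (\<lambda>x. (cmod (U x))^2)"
    using H unfolding H10_grad_def set_integrable_def U_sq by auto
  have G_int: "integrable lborel (\<lambda>x. (norm (G x))^2)"
    using H unfolding H10_grad_def set_integrable_def G_sq by (simp add: norm_vec_power2)
  obtain \<phi> where tf: "\<And>n. test_fun \<Omega> (\<phi> n)"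
    and u_lim: "(\<lambda>n. LINT x:\<Omega>|lborel. (cmod (\<phi> n x - u x))^2) \<longlonglongrightarrow> 0"
    and g_lim: "\<And>i. (\<lambda>n. LINT x:\<Omega>|lborel. (cmod (partial_d i (\<phi> n) x - g x $ i))^2) \<longlonglongrightarrow> 0"
    using H unfolding H10_grad_def by blast
  have [measurable]: "\<phi> n \<in> borel_measurable lborel" "grad (\<phi> n) \<in> borel_measurable lborel" for n
    using smooth_fun_continuous smooth_fun_grad_continuous test_fun_smooth[OF tf]
    by (simp_all add: borel_measurable_continuous_onI)
  have "(\<lambda>n. \<integral>x. (cmod (\<phi> n x - U x))^2 \<partial>lborel) \<longlonglongrightarrow> 0"
  proof -
    have "indicator \<Omega> x *\<^sub>R (cmod (\<phi> n x - u x))^2 = (cmod (\<phi> n x - U x))^2" for n x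
      unfolding U_def using test_fun_eq_0[OF tf] by (simp add: indicator_def)
    then show ?thesis
      using u_lim by (simp add: set_lebesgue_integral_def)
  qed
  moreover have "(\<lambda>n. \<integral>x. (norm (grad (\<phi> n) x - G x))^2 \<partial>lborel) \<longlonglongrightarrow> 0"
  proof -
    have "indicator \<Omega> x *\<^sub>R (cmod (partial_d i (\<phi> n) x - g x $ i))^2 = (cmod ((grad (\<phi> n) x - G x) $ i))^2"
      for n x i
      unfolding G_def using test_fun_grad_eq_0[OF tf] by (simp add: indicator_def grad_def vec_eq_iff)
    then have "(\<lambda>n. \<Sum>i\<in>UNIV. \<integral>x. (cmod ((grad (\<phi> n) x - G x) $ i))^2 \<partial>lborel) \<longlonglongrightarrow> 0"
      using g_lim by (intro tendsto_null_sum) (simp add: set_lebesgue_integral_def)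
    moreover have "integrable lborel (\<lambda>x. (norm (grad (\<phi> n) x - G x))^2)" for n
      by (rule integrable_norm_diff_sq[OF _ _ test_fun_integrable_norm_sq(2)[OF tf] G_int]) measurable
    ultimately show ?thesis
      by (simp add: integral_norm_vec_sq)
  qed
  ultimately have "(\<integral>x. (cmod (U x))^2 \<partial>lborel) \<le> C * (\<integral>x. (norm (G x))^2 \<partial>lborel)"
    using integral_norm_sq_le_of_L2_limits[where M=lborel and fs=\<phi> and hs="\<lambda>n. grad (\<phi> n)"]
      test_fun_integrable_norm_sq[OF tf] U_int G_int test_poincare[OF tf] C
    by (auto simp del: norm_complex_def)
  then show ?thesis
    unfolding set_lebesgue_integral_def U_sq G_norm_sq .
qed

lemma finite_shifts_into_set:
  fixes S :: "'a::euclidean_space set"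
  assumes r: "0 < r" and near: "\<And>x. \<exists>p. dist x p \<le> R \<and> ball p r \<subseteq> S"
  shows "\<exists>F. finite F \<and> (\<forall>x. \<exists>w\<in>F. x + w \<in> S)"
proof -
  have "cball 0 R \<subseteq> (\<Union>c\<in>cball 0 R. ball c r)"
    using r by force
  then obtain F where fin: "finite F" and cov: "cball (0::'a) R \<subseteq> (\<Union>c\<in>F. ball c r)"
    by (rule compactE_image[OF compact_cball open_ball]) blast
  have "\<exists>w\<in>F. x + w \<in> S" for x
  proof -
    obtain p where p: "dist x p \<le> R" "ball p r \<subseteq> S"
      using near by blast
    then have "p - x \<in> cball 0 R"
      by (simp add: dist_norm norm_minus_commute)
    then obtain w where "w \<in> F" "dist w (p - x) < r"
      using cov by (auto simp: dist_commute)
    moreover have "dist p (x + w) = dist w (p - x)"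
      by (simp add: dist_norm norm_minus_commute algebra_simps)
    ultimately have "w \<in> F" "x + w \<in> ball p r"
      by simp_all
    then show ?thesis
      using p(2) by blast
  qed
  then show ?thesis
    using fin by blast
qed

lemma component_contains_translate:
  fixes D :: "nat \<Rightarrow> 'a::real_normed_vector set"
  assumes DD: "DD = (\<Union>n<N. \<Union>u\<in>Lam n. (+) u ` D n)" and conn: "\<forall>n<N. connected (D n)"
    and A: "A \<in> components DD"
  shows "\<exists>n<N. \<exists>u\<in>Lam n. (+) u ` D n \<subseteq> A"
proof -
  obtain a where a: "a \<in> A"
    using in_components_nonempty[OF A] by blast
  then obtain n u where n: "n < N" and u: "u \<in> Lam n" and au: "a \<in> (+) u ` D n"
    using in_components_subset[OF A] unfolding DD by blast
  have "connected ((+) u ` D n)"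
    using conn n by (intro connected_continuous_image) (auto intro: continuous_intros)
  moreover have "(+) u ` D n \<subseteq> DD"
    unfolding DD using n u by blast
  ultimately have "(+) u ` D n \<subseteq> A"
    using components_maximal[OF A] a au by blast
  then show ?thesis
    using n u by blast
qed

lemma uniform_balls_near_every_point:
  fixes D Y :: "nat \<Rightarrow> 'a::real_normed_vector set"
  assumes shapes: "\<forall>n<N. open (D n) \<and> D n \<noteq> {} \<and> connected (D n)"
    and DD: "DD = (\<Union>n<N. \<Union>u\<in>Lam n. (+) u ` D n)"
    and bdd: "\<forall>m<M. bounded (Y m)"
    and cover: "(\<Union>m<M. \<Union>v\<in>Sig m. closure ((+) v ` Y m)) = UNIV"
    and occupied: "\<forall>m<M. \<forall>v\<in>Sig m. \<exists>A\<in>components DD. A \<subseteq> (+) v ` Y m"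
  shows "\<exists>r>0. \<exists>R. \<forall>x. \<exists>p. dist x p \<le> R \<and> ball p r \<subseteq> DD"
proof -
  have "\<forall>n<N. \<exists>q \<rho>. 0 < \<rho> \<and> ball q \<rho> \<subseteq> D n"
    using shapes by (meson ex_in_conv openE)
  then obtain q \<rho> where q\<rho>: "\<And>n. n < N \<Longrightarrow> 0 < \<rho> n \<and> ball (q n) (\<rho> n) \<subseteq> D n"
    by metis
  \<comment> \<open>The \<open>1\<close> keeps the minimum meaningful when \<open>N = 0\<close>.\<close>
  define r where "r = Min (insert 1 (\<rho> ` {..<N}))"
  have r_pos: "0 < r" and r_le: "\<And>n. n < N \<Longrightarrow> r \<le> \<rho> n"
    using q\<rho> by (auto simp: r_def)
  define R where "R = (\<Sum>m<M. diameter (closure (Y m)))"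
  have "\<exists>p. dist x p \<le> R \<and> ball p r \<subseteq> DD" for x
  proof -
    obtain m v where m: "m < M" and v: "v \<in> Sig m" and x: "x \<in> closure ((+) v ` Y m)"
      using cover by blast
    obtain A where A: "A \<in> components DD" "A \<subseteq> (+) v ` Y m"
      using occupied m v by blast
    obtain n u where n: "n < N" and u: "u \<in> Lam n" and uD: "(+) u ` D n \<subseteq> A"
      using component_contains_translate[OF DD _ A(1)] shapes by blast
    define p where "p = u + q n"
    have "ball p r \<subseteq> (+) u ` D n"
    proof
      fix y assume "y \<in> ball p r"
      then have "y - u \<in> ball (q n) (\<rho> n)"
        using r_le[OF n] by (simp add: p_def dist_norm algebra_simps)
      then show "y \<in> (+) u ` D n"
        using q\<rho>[OF n] by (force simp: image_iff)
    qed
    moreover have "(+) u ` D n \<subseteq> DD"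
      unfolding DD using n u by blast
    moreover have "dist x p \<le> R"
    proof -
      have "p \<in> (+) v ` Y m"
        using q\<rho>[OF n] uD A(2) by (force simp: p_def)
      then have "x - v \<in> closure (Y m)" "p - v \<in> closure (Y m)"
        using x closure_subset[of "Y m"] by (auto simp: closure_translation)
      then have "dist (x - v) (p - v) \<le> diameter (closure (Y m))"
        using bdd m by (intro diameter_bounded_bound bounded_closure) auto
      also have "\<dots> \<le> R"
        unfolding R_def using bdd m
        by (intro member_le_sum diameter_ge_0 bounded_closure) auto
      finally show ?thesis
        by (simp add: dist_norm)
    qed
    ultimately show ?thesis
      by blast
  qed
  then show ?thesis
    using r_pos by blast
qed

theorem mainTheorem2:
  fixes Ntype :: nat and D :: "nat \<Rightarrow> pt set" and Lam :: "nat \<Rightarrow> pt set"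
    and c :: real and v1 v2 :: pt and M :: nat and Y :: "nat \<Rightarrow> pt set"
    and Sig :: "nat \<Rightarrow> pt set" and K :: nat
    and DD :: "pt set" and \<Omega> :: "pt set"
  assumes shapes: "\<forall>n<Ntype. bounded (D n) \<and> open (D n) \<and> simply_connected (D n) \<and>
                     C1_boundary (D n) \<and> measure lborel (D n) = 1"
    and discr: "\<forall>n<Ntype. discrete_set (Lam n)"
    and DD_def: "DD = (\<Union>n<Ntype. \<Union>u\<in>Lam n. (+) u ` D n)"
    and Omega_def: "\<Omega> = - closure DD"
    and c_pos: "c > 0"
    and sep: "\<forall>A\<in>components DD. \<forall>B\<in>components DD. A \<noteq> B \<longrightarrow> c \<le> setdist A B"
    and latt: "\<not> collinear {0, v1, v2}"
    and polys: "\<forall>m<M. polygon (Y m)"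
    and Sig_sub: "\<forall>m<M. Sig m \<subseteq> lattice_gen v1 v2"
    and disj: "\<forall>m<M. \<forall>m'<M. \<forall>v\<in>Sig m. \<forall>v'\<in>Sig m'. (m, v) \<noteq> (m', v') \<longrightarrow>
                 ((+) v ` Y m) \<inter> ((+) v' ` Y m') = {}"
    and cover: "(\<Union>m<M. \<Union>v\<in>Sig m. closure ((+) v ` Y m)) = UNIV"
    and K_pos: "K \<ge> 1"
    and cellK: "\<forall>m<M. \<forall>v\<in>Sig m. card {A \<in> components DD. A \<subseteq> (+) v ` Y m} = K"
    and cell_cpt: "\<forall>m<M. \<forall>v\<in>Sig m. closure (((+) v ` Y m) \<inter> DD) \<subseteq> (+) v ` Y m"
    and cell_dist: "\<forall>m<M. \<forall>v\<in>Sig m. c \<le> setdist (frontier ((+) v ` Y m)) DD"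
  shows "\<exists>z0>0. \<forall>u g. H10_grad \<Omega> u g \<longrightarrow>
           (LINT x:\<Omega>|lborel. (\<Sum>i\<in>UNIV. (cmod (g x $ i))^2))
             \<ge> z0 * (LINT x:\<Omega>|lborel. (cmod (u x))^2)"
proof -
  have "\<forall>n<Ntype. open (D n) \<and> D n \<noteq> {} \<and> connected (D n)"
    using shapes by (fastforce intro: simply_connected_imp_connected)
  moreover have "\<forall>m<M. bounded (Y m)"
    using polys by (simp add: polygon_def)
  moreover have "\<forall>m<M. \<forall>v\<in>Sig m. \<exists>A\<in>components DD. A \<subseteq> (+) v ` Y m"
    using cellK K_pos by (metis (no_types, lifting) card.empty empty_Collect_eq not_one_le_zero)
  ultimately obtain F where F: "finite F" "\<And>x. \<exists>w\<in>F. x + w \<in> DD"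
    using uniform_balls_near_every_point[OF _ DD_def _ cover] finite_shifts_into_set by metis
  define C where "C = (\<Sum>w\<in>F. (norm w)^2) + 1"
  have "(\<integral>x. (cmod (\<phi> x))^2 \<partial>lborel) \<le> C * (\<integral>x. (norm (grad \<phi> x))^2 \<partial>lborel)"
    if "test_fun \<Omega> \<phi>" for \<phi>
  proof -
    have "\<exists>w\<in>F. x + w \<notin> \<Omega>" for x
      using F(2)[of x] closure_subset unfolding Omega_def by blast
    then have "(\<integral>x. (cmod (\<phi> x))^2 \<partial>lborel) \<le> (\<Sum>w\<in>F. (norm w)^2) * (\<integral>x. (norm (grad \<phi> x))^2 \<partial>lborel)"
      by (rule test_fun_poincare[OF that F(1)])
    also have "\<dots> \<le> C * (\<integral>x. (norm (grad \<phi> x))^2 \<partial>lborel)"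
      unfolding C_def by (intro mult_right_mono) simp_all
    finally show ?thesis .
  qed
  moreover have "0 < C"
    unfolding C_def by (simp add: sum_nonneg add_nonneg_pos)
  ultimately show ?thesis
    using H10_grad_poincare by (intro exI[of _ "1 / C"]) (auto simp: field_simps)
qed

end
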